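(* For every $n\ge1$, $\langle r\rangle_{\mathrm{H}_n}=\frac{1}{2^nn!}\sum_{\sigma\in\mathrm{H}_n}r(\lambda_\sigma)=1$.
   Context: Signed factorization types: finitely supported $\lambda\colon\mathbb{N}\times\mathbb{N}\times\{1,-1,0\}\to\mathbb{Z}_{\ge0}$. $r(\lambda)=\prod_{d,e}(e+1)^{\lambda(d,e,1)}$ if $\lambda(d,e,-1)=0$ for all $d$ and all odd $e$, and $r(\lambda)=0$ otherwise. $\mathrm{H}_n=\mathbb{F}_2^n\rtimes S_n$ ($S_n$ permuting coordinates), elements $\sigma=x\tau$; $\lambda_\sigma(d,1,s)$ is the number of orbits $\Omega$ of $\tau$ on $\{1,\dots,n\}$ with $\#\Omega=d$ and $(-1)^{\sum_{i\in\Omega}x_i}=s$, and $\lambda_\sigma(d,e,s)=0$ for $e\ne1$. *)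

theory Defs
  imports Complex_Main "HOL-Combinatorics.Permutations" "HOL-Combinatorics.Orbits"
begin

text \<open>Signed factorization types: functions
  lam :: nat \<Rightarrow> nat \<Rightarrow> int \<Rightarrow> nat, lam d e s, with d, e \<in> \<nat> and s \<in> {1,-1,0}
  (values at other s are irrelevant for the statement).\<close>

type_synonym sftype = "nat \<Rightarrow> nat \<Rightarrow> int \<Rightarrow> nat"

definition r_fun :: "sftype \<Rightarrow> nat" where
  "r_fun lam =
     (if \<forall>d e. odd e \<longrightarrow> lam d e (-1) = 0
      then (\<Prod>(d, e) \<in> {(d, e). lam d e 1 \<noteq> 0}. (e + 1) ^ lam d e 1)
      else 0)"

text \<open>The hyperoctahedral group H_n = F_2^n \<rtimes> S_n, elements sigma = x tau,
  represented as pairs (x, tau) with x \<in> {1..n} \<rightarrow> {0,1} (extensional) and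
  tau a permutation of {1..n}.\<close>

definition hyperoct :: "nat \<Rightarrow> ((nat \<Rightarrow> nat) \<times> (nat \<Rightarrow> nat)) set" where
  "hyperoct n = {(x, \<tau>). x \<in> {1..n} \<rightarrow>\<^sub>E {0, 1} \<and> \<tau> permutes {1..n}}"

definition perm_orbits :: "nat \<Rightarrow> (nat \<Rightarrow> nat) \<Rightarrow> nat set set" where
  "perm_orbits n \<tau> = (\<lambda>i. orbit \<tau> i) ` {1..n}"

definition lambda_sigma :: "nat \<Rightarrow> (nat \<Rightarrow> nat) \<times> (nat \<Rightarrow> nat) \<Rightarrow> sftype" where
  "lambda_sigma n \<sigma> d e s =
     (if e = 1 then
        card {\<Omega> \<in> perm_orbits n (snd \<sigma>).
                card \<Omega> = d \<and> (-1::int) ^ (\<Sum>i\<in>\<Omega>. fst \<sigma> i) = s}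
      else 0)"

end

theory Submission
  imports Defs
begin

text \<open>If some orbit of \<open>\<tau>\<close> has odd sign sum, then \<open>\<lambda>\<^sub>\<sigma>(d,1,-1) > 0\<close> with \<open>e = 1\<close> odd,
  so \<open>r(\<lambda>\<^sub>\<sigma>) = 0\<close>; otherwise \<open>r(\<lambda>\<^sub>\<sigma>) = 2\<^sup>k\<close> with \<open>k\<close> the number of orbits. Flipping one coordinate
  inside an orbit toggles the parity of that orbit only, so exactly \<open>2\<^sup>n\<^sup>-\<^sup>k\<close> sign vectors have
  even sum on every orbit. Hence the sum over \<open>x\<close> is \<open>2\<^sup>n\<close> for every \<open>\<tau>\<close>, and the sum over
  \<open>H\<^sub>n\<close> is \<open>2\<^sup>n n!\<close>.\<close>

definition even_block_vectors :: "'a set \<Rightarrow> 'a set set \<Rightarrow> ('a \<Rightarrow> nat) set" where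
  "even_block_vectors A P = {x \<in> A \<rightarrow>\<^sub>E {0, 1}. \<forall>W\<in>P. even (sum x W)}"

lemma card_even_sum_eq_card_odd_sum:
  fixes F :: "('a \<Rightarrow> nat) set"
  assumes "a \<in> W" "finite W"
    and bit: "\<And>x. x \<in> F \<Longrightarrow> x a \<in> {0, 1}"
    and flip_closed: "\<And>x. x \<in> F \<Longrightarrow> x(a := 1 - x a) \<in> F"
  shows "card {x \<in> F. even (sum x W)} = card {x \<in> F. odd (sum x W)}"
proof -
  define flip where "flip x = x(a := 1 - x a)" for x :: "'a \<Rightarrow> nat"
  have flip_flip: "flip (flip x) = x" if "x \<in> F" for x
    using bit[OF that] by (auto simp: flip_def)
  have parity_flip: "even (sum (flip x) W) \<longleftrightarrow> odd (sum x W)" if "x \<in> F" for x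
  proof -
    have "sum (flip x) (W - {a}) = sum x (W - {a})"
      by (rule sum.cong) (auto simp: flip_def)
    then have "sum (flip x) W + sum x W = 2 * sum x (W - {a}) + 1"
      using bit[OF that] assms(1,2) by (auto simp: sum.remove flip_def)
    then have "odd (sum (flip x) W + sum x W)"
      by simp
    then show ?thesis
      by simp
  qed
  have "bij_betw flip {x \<in> F. even (sum x W)} {x \<in> F. odd (sum x W)}"
    by (rule bij_betw_byWitness[where f' = flip])
      (auto simp: flip_flip parity_flip flip_closed[folded flip_def])
  then show ?thesis by (rule bij_betw_same_card)
qed

lemma card_even_block_vectors:
  assumes "finite A" "disjoint P" "{} \<notin> P" "\<Union>P \<subseteq> A"
  shows "card (even_block_vectors A P) * 2 ^ card P = 2 ^ card A"
proof -
  have "finite P"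
    using assms(1,4) by (meson finite_UnionD finite_subset)
  then show ?thesis
    using assms(2-4)
  proof (induction P rule: finite_induct)
    case empty
    show ?case
      using \<open>finite A\<close> by (simp add: even_block_vectors_def card_PiE numeral_2_eq_2)
  next
    case (insert W P)
    obtain a where "a \<in> W"
      using insert.prems(2) by blast
    have "a \<notin> \<Union>P"
      using insert.hyps(2) insert.prems(1) \<open>a \<in> W\<close> by (auto simp: pairwise_insert disjnt_def)
    have "finite W" "a \<in> A"
      using insert.prems(3) \<open>a \<in> W\<close> \<open>finite A\<close> by (auto intro: finite_subset)
    define F where "F = even_block_vectors A P"
    have bit: "x a \<in> {0, 1}" if "x \<in> F" for x
      using that \<open>a \<in> A\<close> by (auto simp: F_def even_block_vectors_def)
    have flip_closed: "x(a := 1 - x a) \<in> F" if "x \<in> F" for x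
    proof -
      have "sum (x(a := 1 - x a)) V = sum x V" if "V \<in> P" for V
        using \<open>a \<notin> \<Union>P\<close> that by (intro sum.cong) auto
      moreover have "x(a := 1 - x a) \<in> A \<rightarrow>\<^sub>E {0, 1}"
        using \<open>x \<in> F\<close> \<open>a \<in> A\<close> unfolding F_def even_block_vectors_def PiE_iff extensional_def
        by auto
      ultimately show ?thesis
        using \<open>x \<in> F\<close> by (simp add: F_def even_block_vectors_def)
    qed
    have "finite F"
      using \<open>finite A\<close> by (simp add: F_def even_block_vectors_def finite_PiE)
    have "F = {x \<in> F. even (sum x W)} \<union> {x \<in> F. odd (sum x W)}"
      by auto
    then have "card F = card {x \<in> F. even (sum x W)} + card {x \<in> F. odd (sum x W)}"
      using \<open>finite F\<close> by (metis (no_types, lifting) card_Un_disjoint disjoint_iff finite_Un mem_Collect_eq)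
    also have "\<dots> = 2 * card {x \<in> F. even (sum x W)}"
      using \<open>a \<in> W\<close> \<open>finite W\<close> bit flip_closed by (simp add: card_even_sum_eq_card_odd_sum)
    also have "\<dots> = 2 * card (even_block_vectors A (insert W P))"
      by (simp add: F_def even_block_vectors_def conj_ac)
    finally show ?case
      using insert by (simp add: F_def pairwise_insert)
  qed
qed

lemma partition_on_orbits:
  assumes "f permutes S" "finite S"
  shows "partition_on S (orbit f ` S)"
proof (rule partition_onI)
  have "permutation f"
    using assms by (auto simp: permutation_permutes)
  then have self_in: "x \<in> orbit f x" for x
    by (rule permutation_self_in_orbit)
  show "\<Union>(orbit f ` S) = S"
    using permutes_orbit_subset[OF assms(1)] self_in by blast
  show "{} \<notin> orbit f ` S"
    using self_in by blast
  have orbit_eq: "orbit f y = orbit f x" if "y \<in> orbit f x" for x y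
    using orbit_cyclic_eq3[OF cyclic_on_orbit'[OF \<open>permutation f\<close>] that] .
  show "disjnt V V'" if "V \<in> orbit f ` S" "V' \<in> orbit f ` S" "V \<noteq> V'" for V V'
    using that by (metis disjnt_iff imageE orbit_eq)
qed

lemma r_fun_eq_0_if_negative_odd:
  assumes "odd e" "lam d e (-1) \<noteq> 0"
  shows "r_fun lam = 0"
  using assms by (auto simp: r_fun_def)

lemma r_fun_eq_power_if_positive_degree_one:
  assumes "\<And>d e. lam d e (-1) = 0" "\<And>d e. e \<noteq> 1 \<Longrightarrow> lam d e 1 = 0"
    and "finite D" "\<And>d. lam d 1 1 \<noteq> 0 \<Longrightarrow> d \<in> D"
  shows "r_fun lam = 2 ^ (\<Sum>d\<in>D. lam d 1 1)"
proof -
  define D' where "D' = {d \<in> D. lam d 1 1 \<noteq> 0}"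
  have support: "{(d, e). lam d e 1 \<noteq> 0} = (\<lambda>d. (d, 1)) ` D'"
  proof (intro set_eqI iffI)
    fix p assume "p \<in> {(d, e). lam d e 1 \<noteq> 0}"
    then obtain d e where "p = (d, e)" "lam d e 1 \<noteq> 0" by blast
    then show "p \<in> (\<lambda>d. (d, 1)) ` D'"
      using assms(2,4) by (cases "e = 1") (auto simp: D'_def)
  qed (auto simp: D'_def)
  have "r_fun lam = (\<Prod>(d, e) \<in> (\<lambda>d. (d, 1)) ` D'. (e + 1) ^ lam d e 1)"
    using assms(1) unfolding r_fun_def support by simp
  also have "\<dots> = (\<Prod>d\<in>D'. 2 ^ lam d 1 1)"
    by (simp add: prod.reindex inj_on_def numeral_2_eq_2)
  also have "\<dots> = 2 ^ (\<Sum>d\<in>D'. lam d 1 1)"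
    by (simp add: power_sum)
  also have "(\<Sum>d\<in>D'. lam d 1 1) = (\<Sum>d\<in>D. lam d 1 1)"
    using \<open>finite D\<close> by (intro sum.mono_neutral_left) (auto simp: D'_def)
  finally show ?thesis .
qed

lemma finite_perm_orbits: "finite (perm_orbits n \<tau>)"
  by (simp add: perm_orbits_def)

lemma r_fun_lambda_sigma:
  "r_fun (lambda_sigma n (x, \<tau>)) =
     (if \<forall>W\<in>perm_orbits n \<tau>. even (sum x W) then 2 ^ card (perm_orbits n \<tau>) else 0)"
proof (cases "\<forall>W\<in>perm_orbits n \<tau>. even (sum x W)")
  case True
  define P where "P = perm_orbits n \<tau>"
  have "finite P"
    by (simp add: P_def finite_perm_orbits)
  have "r_fun (lambda_sigma n (x, \<tau>)) = 2 ^ (\<Sum>d\<in>card ` P. lambda_sigma n (x, \<tau>) d 1 1)"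
  proof (rule r_fun_eq_power_if_positive_degree_one)
    fix d e
    have no_odd: "{\<Omega> \<in> perm_orbits n \<tau>. card \<Omega> = d \<and> (-1::int) ^ sum x \<Omega> = -1} = {}"
      using True by (auto simp: minus_one_power_iff)
    show "lambda_sigma n (x, \<tau>) d e (-1) = 0"
      unfolding lambda_sigma_def fst_conv snd_conv no_odd by simp
  next
    show "lambda_sigma n (x, \<tau>) d 1 1 \<noteq> 0 \<Longrightarrow> d \<in> card ` P" for d
      by (fastforce simp: lambda_sigma_def P_def card_gt_0_iff)
  qed (simp_all add: lambda_sigma_def \<open>finite P\<close>)
  also have "(\<Sum>d\<in>card ` P. lambda_sigma n (x, \<tau>) d 1 1) = (\<Sum>d\<in>card ` P. card {W \<in> P. card W = d})"
    using True by (intro sum.cong) (auto simp: lambda_sigma_def P_def minus_one_power_iff intro!: arg_cong[where f = card])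
  also have "\<dots> = card P"
    using sum.group[OF \<open>finite P\<close> finite_imageI[OF \<open>finite P\<close>] subset_refl, of "\<lambda>_. 1 :: nat" card]
    by simp
  finally show ?thesis
    using True by (simp add: P_def)
next
  case False
  then obtain W where W: "W \<in> perm_orbits n \<tau>" "odd (sum x W)"
    by blast
  have "lambda_sigma n (x, \<tau>) (card W) 1 (-1) \<noteq> 0"
    using W by (auto simp: lambda_sigma_def minus_one_power_iff finite_perm_orbits card_eq_0_iff)
  then show ?thesis
    using False r_fun_eq_0_if_negative_odd[of 1] by simp
qed

lemma sum_r_fun_lambda_sigma_over_signs:
  assumes "\<tau> permutes {1..n}"
  shows "(\<Sum>x\<in>{1..n} \<rightarrow>\<^sub>E {0, 1}. r_fun (lambda_sigma n (x, \<tau>))) = 2 ^ n"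
proof -
  define P where "P = perm_orbits n \<tau>"
  have "partition_on {1..n} P"
    using partition_on_orbits[OF assms] by (simp add: P_def perm_orbits_def)
  have "(\<Sum>x\<in>{1..n} \<rightarrow>\<^sub>E {0, 1}. r_fun (lambda_sigma n (x, \<tau>)))
      = (\<Sum>x\<in>{1..n} \<rightarrow>\<^sub>E {0, 1::nat}. if \<forall>W\<in>P. even (sum x W) then 2 ^ card P else 0)"
    unfolding P_def by (simp add: r_fun_lambda_sigma)
  also have "\<dots> = card (even_block_vectors {1..n} P) * 2 ^ card P"
    by (simp add: sum.If_cases finite_PiE even_block_vectors_def Int_def)
  also have "\<dots> = 2 ^ n"
    using card_even_block_vectors[of "{1..n}" P] \<open>partition_on {1..n} P\<close>
    by (simp add: partition_on_def)
  finally show ?thesis .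
qed

theorem mainTheorem19:
  fixes n :: nat
  assumes "n \<ge> 1"
  shows "(1 / (2 ^ n * fact n)) * (\<Sum>\<sigma>\<in>hyperoct n. real (r_fun (lambda_sigma n \<sigma>))) = (1::real)"
proof -
  have "hyperoct n = ({1..n} \<rightarrow>\<^sub>E {0, 1}) \<times> {\<tau>. \<tau> permutes {1..n}}"
    by (auto simp: hyperoct_def)
  then have "(\<Sum>\<sigma>\<in>hyperoct n. r_fun (lambda_sigma n \<sigma>))
      = (\<Sum>x\<in>{1..n} \<rightarrow>\<^sub>E {0, 1}. \<Sum>\<tau> | \<tau> permutes {1..n}. r_fun (lambda_sigma n (x, \<tau>)))"
    by (simp add: sum.cartesian_product case_prod_unfold)
  also have "\<dots> = (\<Sum>\<tau> | \<tau> permutes {1..n}. \<Sum>x\<in>{1..n} \<rightarrow>\<^sub>E {0, 1}. r_fun (lambda_sigma n (x, \<tau>)))"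
    by (rule sum.swap)
  also have "\<dots> = (\<Sum>\<tau> | \<tau> permutes {1..n}. 2 ^ n)"
  proof (rule sum.cong)
    fix \<tau> assume "\<tau> \<in> {\<tau>. \<tau> permutes {1..n}}"
    then show "(\<Sum>x\<in>{1..n} \<rightarrow>\<^sub>E {0, 1}. r_fun (lambda_sigma n (x, \<tau>))) = 2 ^ n"
      using sum_r_fun_lambda_sigma_over_signs[of \<tau> n] by simp
  qed simp
  also have "\<dots> = fact n * 2 ^ n"
    by (simp add: card_permutations)
  finally show ?thesis
    by (simp flip: of_nat_sum)
qed

end
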